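(* Let $\mathcal{K}$ be a family of kernels on $X\times X$, let $\epsilon,\gamma>0$, and let $\mathbf{P}=(P_1,\dots,P_{2n})$ be any probability distributions over $X\times Y$. Then there exists $\tilde{\mathcal{K}}\subset\mathcal{K}$ with $|\tilde{\mathcal{K}}|\leq N_{(D,2n)}(\mathcal{K},\epsilon\gamma/16)$ such that for every $K\in\mathcal{K}$ there exists $\tilde K\in\tilde{\mathcal{K}}$ with \[ er^\gamma_{P_i}(\mathcal{F}_K)+\epsilon/8\geq er^{\gamma/2}_{P_i}(\mathcal{F}_{\tilde{K}})\geq er_{P_i}(\mathcal{F}_K)-\epsilon/8\quad \text{for all } i=1,\dots,2n. \]
   Context: $Y=\{-1,1\}$. A kernel is $K(x,x')=\langle\phi(x),\phi(x')\rangle$ for a map $\phi$ into a Hilbert space; $\mathcal{F}_K=\{x\mapsto\langle w,\phi(x)\rangle:\|w\|\le1\}$. $\llbracket\cdot\rrbracket$ is the indicator. For a distribution $P$ on $X\times Y$: $er_P(\mathcal{F}_K)=\inf_{h\in\mathcal{F}_K}\mathbb{E}_{(x,y)\sim P}\llbracket h(x)y<0\rrbracket$ and $er^\gamma_P(\mathcal{F}_K)=\inf_{h\in\mathcal{F}_K}\mathbb{E}_{(x,y)\sim P}\llbracket h(x)y<\gamma\rrbracket$. With $P_X$ the marginal on $X$, $D_P(K,\tilde K)=\max\{\max_{h\in\mathcal{F}_K}\min_{h'\in\mathcal{F}_{\tilde K}}\mathbb{E}_{x\sim P_X}|h(x)-h'(x)|,\ \max_{h'\in\mathcal{F}_{\tilde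 K}}\min_{h\in\mathcal{F}_K}\mathbb{E}_{x\sim P_X}|h(x)-h'(x)|\}$; for a tuple $\mathbf{Q}=(Q_1,\dots,Q_r)$, $D_{\mathbf{Q}}=\max_i D_{Q_i}$. An $\epsilon$-cover of $\mathcal{K}$ w.r.t. $D_{\mathbf{Q}}$ is a subset $\tilde{\mathcal{K}}\subset\mathcal{K}$ with every $K$ having $\tilde K\in\tilde{\mathcal{K}}$, $D_{\mathbf{Q}}(K,\tilde K)<\epsilon$; $N_{D_{\mathbf{Q}}}(\mathcal{K},\epsilon)$ is its minimal size and $N_{(D,r)}(\mathcal{K},\epsilon)=\max_{(Q_1,\dots,Q_r)}N_{D_{\mathbf{Q}}}(\mathcal{K},\epsilon)$. *)

theory Defs
  imports "HOL-Probability.Probability"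
begin

definition lab :: "bool \<Rightarrow> real" where
  "lab y = (if y then 1 else -1)"

definition is_kernel :: "'h::{real_inner,complete_space} itself \<Rightarrow> ('x \<Rightarrow> 'x \<Rightarrow> real) \<Rightarrow> bool" where
  "is_kernel T K \<longleftrightarrow> (\<exists>\<phi>::'x \<Rightarrow> 'h. \<forall>x x'. K x x' = inner (\<phi> x) (\<phi> x'))"

text \<open>F_K = {x. <w, phi x> : norm w <= 1}, for a feature map phi (into 'h) realising K.
  (This set does not depend on the choice of phi.)\<close>
definition Fk :: "'h::{real_inner,complete_space} itself \<Rightarrow> ('x \<Rightarrow> 'x \<Rightarrow> real) \<Rightarrow> ('x \<Rightarrow> real) set" where
  "Fk T K = {h. \<exists>\<phi>::'x \<Rightarrow> 'h. (\<forall>x x'. K x x' = inner (\<phi> x) (\<phi> x')) \<and>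
                 (\<exists>w. norm w \<le> 1 \<and> h = (\<lambda>x. inner w (\<phi> x)))}"

definition err :: "('x \<times> bool) measure \<Rightarrow> ('x \<Rightarrow> real) set \<Rightarrow> real" where
  "err P F = (INF h\<in>F. measure P {z \<in> space P. h (fst z) * lab (snd z) < 0})"

definition err_margin :: "('x \<times> bool) measure \<Rightarrow> real \<Rightarrow> ('x \<Rightarrow> real) set \<Rightarrow> real" where
  "err_margin P \<gamma> F = (INF h\<in>F. measure P {z \<in> space P. h (fst z) * lab (snd z) < \<gamma>})"

definition dist_XY :: "'x measure \<Rightarrow> ('x \<times> bool) measure \<Rightarrow> bool" where
  "dist_XY M P \<longleftrightarrow> prob_space P \<and> sets P = sets (M \<Otimes>\<^sub>M count_space UNIV)"

definition Ldist :: "'x measure \<Rightarrow> ('x \<times> bool) measure \<Rightarrow> ('x \<Rightarrow> real) \<Rightarrow> ('x \<Rightarrow> real) \<Rightarrow> ennreal" where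
  "Ldist M P h h' = (\<integral>\<^sup>+ x. ennreal \<bar>h x - h' x\<bar> \<partial>(distr P M fst))"

definition Dk :: "'h::{real_inner,complete_space} itself \<Rightarrow> 'x measure \<Rightarrow> ('x \<times> bool) measure
    \<Rightarrow> ('x \<Rightarrow> 'x \<Rightarrow> real) \<Rightarrow> ('x \<Rightarrow> 'x \<Rightarrow> real) \<Rightarrow> ennreal" where
  "Dk T M P K K' = max (SUP h\<in>Fk T K. INF h'\<in>Fk T K'. Ldist M P h h')
                       (SUP h'\<in>Fk T K'. INF h\<in>Fk T K. Ldist M P h h')"

definition DQ :: "'h::{real_inner,complete_space} itself \<Rightarrow> 'x measure \<Rightarrow> nat \<Rightarrow> (nat \<Rightarrow> ('x \<times> bool) measure)
    \<Rightarrow> ('x \<Rightarrow> 'x \<Rightarrow> real) \<Rightarrow> ('x \<Rightarrow> 'x \<Rightarrow> real) \<Rightarrow> ennreal" where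
  "DQ T M r Q K K' = (SUP i\<in>{..<r}. Dk T M (Q i) K K')"

definition is_cover :: "'h::{real_inner,complete_space} itself \<Rightarrow> 'x measure \<Rightarrow> nat \<Rightarrow> (nat \<Rightarrow> ('x \<times> bool) measure)
    \<Rightarrow> ('x \<Rightarrow> 'x \<Rightarrow> real) set \<Rightarrow> ennreal \<Rightarrow> ('x \<Rightarrow> 'x \<Rightarrow> real) set \<Rightarrow> bool" where
  "is_cover T M r Q Ks \<epsilon> C \<longleftrightarrow> C \<subseteq> Ks \<and> (\<forall>K\<in>Ks. \<exists>K'\<in>C. DQ T M r Q K K' < \<epsilon>)"

definition ecard :: "'a set \<Rightarrow> enat" where
  "ecard C = (if finite C then enat (card C) else \<infinity>)"

definition cov_num :: "'h::{real_inner,complete_space} itself \<Rightarrow> 'x measure \<Rightarrow> nat \<Rightarrow> (nat \<Rightarrow> ('x \<times> bool) measure)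
    \<Rightarrow> ('x \<Rightarrow> 'x \<Rightarrow> real) set \<Rightarrow> ennreal \<Rightarrow> enat" where
  "cov_num T M r Q Ks \<epsilon> = (INF C\<in>{C. is_cover T M r Q Ks \<epsilon> C}. ecard C)"

definition cov_num_max :: "'h::{real_inner,complete_space} itself \<Rightarrow> 'x measure \<Rightarrow> nat
    \<Rightarrow> ('x \<Rightarrow> 'x \<Rightarrow> real) set \<Rightarrow> ennreal \<Rightarrow> enat" where
  "cov_num_max T M r Ks \<epsilon> = (SUP Q\<in>{Q. \<forall>i<r. dist_XY M (Q i)}. cov_num T M r Q Ks \<epsilon>)"

end

theory Submission
  imports Defs
begin

text \<open>By Markov's inequality, an \<open>L\<^sub>1(P\<^sub>X)\<close>-distance below \<open>\<epsilon>\<gamma>/16\<close> between \<open>h\<close> and \<open>h'\<close>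
  means that \<open>|h - h'| \<ge> \<gamma>/2\<close> only on a set of probability below \<open>\<epsilon>/8\<close>. Off that set, a margin
  of \<open>h'\<close> below \<open>\<gamma>/2\<close> forces a margin of \<open>h\<close> below \<open>\<gamma>\<close>, and a negative margin of \<open>h\<close> forces a
  margin of \<open>h'\<close> below \<open>\<gamma>/2\<close>. A cover of minimal size exists because \<open>enat\<close> is well-ordered,
  and it relates every \<open>K\<close> to some \<open>K'\<close> whose function classes are mutually this close
  under every \<open>P\<^sub>i\<close>; passing to infima over the function classes gives the bounds.\<close>

lemma measurable_dist_XY:
  assumes "dist_XY M P" and "f \<in> borel_measurable (M \<Otimes>\<^sub>M count_space UNIV)"
  shows "f \<in> borel_measurable P"
  using assms measurable_cong_sets[of P "M \<Otimes>\<^sub>M count_space UNIV"] unfolding dist_XY_def by blast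

lemma margin_set_in_sets:
  assumes "dist_XY M P" and [measurable]: "h \<in> borel_measurable M"
  shows "{z \<in> space P. h (fst z) * lab (snd z) < a} \<in> sets P"
proof -
  have "(\<lambda>z. h (fst z) * lab (snd z)) \<in> borel_measurable P"
    by (rule measurable_dist_XY[OF assms(1)]) (simp add: lab_def)
  then show ?thesis by measurable
qed

lemma far_set_in_sets:
  fixes h h' :: "'x \<Rightarrow> real"
  assumes "dist_XY M P" and [measurable]: "h \<in> borel_measurable M" "h' \<in> borel_measurable M"
  shows "{z \<in> space P. t \<le> \<bar>h (fst z) - h' (fst z)\<bar>} \<in> sets P"
proof -
  have "(\<lambda>z. \<bar>h (fst z) - h' (fst z)\<bar>) \<in> borel_measurable P"
    by (rule measurable_dist_XY[OF assms(1)]) measurable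
  then show ?thesis by measurable
qed

lemma Ldist_commute: "Ldist M P h h' = Ldist M P h' h"
  unfolding Ldist_def by (simp add: abs_minus_commute)

lemma Ldist_eq_nn_integral:
  fixes h h' :: "'x \<Rightarrow> real"
  assumes "dist_XY M P" and [measurable]: "h \<in> borel_measurable M" "h' \<in> borel_measurable M"
  shows "Ldist M P h h' = (\<integral>\<^sup>+ z. ennreal \<bar>h (fst z) - h' (fst z)\<bar> \<partial>P)"
proof -
  have "fst \<in> measurable P M"
    using assms(1) measurable_cong_sets[of P "M \<Otimes>\<^sub>M count_space UNIV"]
    unfolding dist_XY_def by auto
  then show ?thesis
    unfolding Ldist_def by (intro nn_integral_distr) simp_all
qed

lemma measure_far_less_of_Ldist_less:
  fixes h h' :: "'x \<Rightarrow> real"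
  assumes P: "dist_XY M P" and h: "h \<in> borel_measurable M" "h' \<in> borel_measurable M"
    and L: "Ldist M P h h' < ennreal (c * t)" and t: "t > 0"
  shows "measure P {z \<in> space P. t \<le> \<bar>h (fst z) - h' (fst z)\<bar>} < c"
proof -
  interpret prob_space P using P unfolding dist_XY_def by blast
  define B where "B = {z \<in> space P. t \<le> \<bar>h (fst z) - h' (fst z)\<bar>}"
  have B: "B \<in> sets P" unfolding B_def using far_set_in_sets[OF P h] .
  have "ennreal (t * measure P B) = (\<integral>\<^sup>+ z. ennreal t * indicator B z \<partial>P)"
    using B t by (simp add: nn_integral_cmult_indicator emeasure_eq_measure ennreal_mult)
  also have "\<dots> \<le> (\<integral>\<^sup>+ z. ennreal \<bar>h (fst z) - h' (fst z)\<bar> \<partial>P)"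
    by (intro nn_integral_mono) (auto simp: B_def indicator_def)
  also have "\<dots> < ennreal (c * t)"
    using L Ldist_eq_nn_integral[OF P h] by simp
  finally have "t * measure P B < c * t"
    using t by (subst (asm) ennreal_less_iff) auto
  then show ?thesis using t unfolding B_def by simp
qed

lemma measure_margin_le_shifted_margin:
  assumes P: "dist_XY M P" and h: "h \<in> borel_measurable M" "h' \<in> borel_measurable M"
  shows "measure P {z \<in> space P. h' (fst z) * lab (snd z) < a}
    \<le> measure P {z \<in> space P. h (fst z) * lab (snd z) < a + t}
       + measure P {z \<in> space P. t \<le> \<bar>h (fst z) - h' (fst z)\<bar>}"
    (is "measure P ?A' \<le> measure P ?A + measure P ?B")
proof -
  interpret prob_space P using P unfolding dist_XY_def by blast
  have margin_shift: "h x * lab y \<le> h' x * lab y + \<bar>h x - h' x\<bar>" for x y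
    by (cases y) (auto simp: lab_def abs_if)
  have "?A' \<subseteq> ?A \<union> ?B"
  proof
    fix z assume "z \<in> ?A'"
    then show "z \<in> ?A \<union> ?B"
      using margin_shift[of "fst z" "snd z"] by (auto simp: not_le)
  qed
  moreover have "?A \<in> sets P" "?B \<in> sets P"
    using margin_set_in_sets[OF P h(1)] far_set_in_sets[OF P h] by auto
  ultimately have "measure P ?A' \<le> measure P (?A \<union> ?B)"
    by (intro finite_measure_mono) auto
  also have "\<dots> \<le> measure P ?A + measure P ?B"
    using \<open>?A \<in> sets P\<close> \<open>?B \<in> sets P\<close> by (rule measure_Un_le)
  finally show ?thesis .
qed

lemma err_eq_err_margin_0: "err P F = err_margin P 0 F"
  unfolding err_def err_margin_def ..

lemma err_margin_le_err_margin_add: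
  assumes "F \<noteq> {}"
    and "\<forall>h\<in>F. \<exists>h'\<in>F'. measure P {z \<in> space P. h' (fst z) * lab (snd z) < a}
                          \<le> measure P {z \<in> space P. h (fst z) * lab (snd z) < b} + c"
  shows "err_margin P a F' \<le> err_margin P b F + c"
proof -
  have "err_margin P a F' - c \<le> measure P {z \<in> space P. h (fst z) * lab (snd z) < b}"
    if "h \<in> F" for h
  proof -
    obtain h' where "h' \<in> F'"
      and "measure P {z \<in> space P. h' (fst z) * lab (snd z) < a}
             \<le> measure P {z \<in> space P. h (fst z) * lab (snd z) < b} + c"
      using assms(2) \<open>h \<in> F\<close> by blast
    moreover have "err_margin P a F' \<le> measure P {z \<in> space P. h' (fst z) * lab (snd z) < a}"
      unfolding err_margin_def using \<open>h' \<in> F'\<close> by (intro cINF_lower bdd_belowI[of _ 0]) auto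
    ultimately show ?thesis by linarith
  qed
  then have "err_margin P a F' - c \<le> err_margin P b F"
    unfolding err_margin_def[of P b] using assms(1) by (intro cINF_greatest) auto
  then show ?thesis by simp
qed

lemma err_margin_le_of_Ldist_close:
  assumes P: "dist_XY M P" and "F \<noteq> {}" "F \<subseteq> borel_measurable M" "F' \<subseteq> borel_measurable M"
    and close: "\<forall>h\<in>F. \<exists>h'\<in>F'. Ldist M P h h' < ennreal (c * t)" and t: "t > 0"
  shows "err_margin P a F' \<le> err_margin P (a + t) F + c"
proof (intro err_margin_le_err_margin_add ballI \<open>F \<noteq> {}\<close>)
  fix h assume "h \<in> F"
  then obtain h' where "h' \<in> F'" and L: "Ldist M P h h' < ennreal (c * t)"
    using close by blast
  have h: "h \<in> borel_measurable M" "h' \<in> borel_measurable M"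
    using \<open>h \<in> F\<close> \<open>h' \<in> F'\<close> assms(3,4) by auto
  show "\<exists>h'\<in>F'. measure P {z \<in> space P. h' (fst z) * lab (snd z) < a}
                 \<le> measure P {z \<in> space P. h (fst z) * lab (snd z) < a + t} + c"
    using measure_margin_le_shifted_margin[OF P h, of a t]
      measure_far_less_of_Ldist_less[OF P h L t]
    by (intro bexI[OF _ \<open>h' \<in> F'\<close>]) linarith
qed

lemma Fk_nonempty:
  fixes T :: "'h::{real_inner,complete_space} itself"
  assumes "is_kernel T K" shows "Fk T K \<noteq> {}"
proof -
  obtain \<phi> :: "_ \<Rightarrow> 'h" where \<phi>: "\<forall>x x'. K x x' = inner (\<phi> x) (\<phi> x')"
    using assms unfolding is_kernel_def by blast
  have "(\<lambda>x. inner (0::'h) (\<phi> x)) \<in> Fk T K"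
    unfolding Fk_def by (intro CollectI exI[of _ \<phi>] conjI \<phi> exI[of _ "0::'h"]) auto
  then show ?thesis by blast
qed

lemma Dk_less_imp_Ldist_close:
  assumes "Dk T M P K K' < \<epsilon>"
  shows "\<forall>h\<in>Fk T K. \<exists>h'\<in>Fk T K'. Ldist M P h h' < \<epsilon>"
    and "\<forall>h'\<in>Fk T K'. \<exists>h\<in>Fk T K. Ldist M P h h' < \<epsilon>"
  using assms unfolding Dk_def by (auto dest!: SUP_lessD simp: INF_less_iff)

lemma Dk_le_DQ: "i < r \<Longrightarrow> Dk T M (Q i) K K' \<le> DQ T M r Q K K'"
  unfolding DQ_def by (intro SUP_upper) simp

lemma err_margin_bounds_of_Dk_less:
  assumes P: "dist_XY M P" and "is_kernel T K" "is_kernel T K'"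
    and "Fk T K \<subseteq> borel_measurable M" "Fk T K' \<subseteq> borel_measurable M"
    and D: "Dk T M P K K' < ennreal (\<epsilon> * \<gamma> / 16)" and "\<gamma> > 0"
  shows "err_margin P (\<gamma>/2) (Fk T K') \<le> err_margin P \<gamma> (Fk T K) + \<epsilon>/8"
    and "err P (Fk T K) - \<epsilon>/8 \<le> err_margin P (\<gamma>/2) (Fk T K')"
proof -
  have close: "Dk T M P K K' < ennreal (\<epsilon>/8 * (\<gamma>/2))"
    using D by (simp add: field_simps)
  show "err_margin P (\<gamma>/2) (Fk T K') \<le> err_margin P \<gamma> (Fk T K) + \<epsilon>/8"
    using err_margin_le_of_Ldist_close[OF P Fk_nonempty[OF \<open>is_kernel T K\<close>] assms(4,5)
        Dk_less_imp_Ldist_close(1)[OF close], of "\<gamma>/2"] \<open>\<gamma> > 0\<close>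
    by simp
  have "err_margin P 0 (Fk T K) \<le> err_margin P (\<gamma>/2) (Fk T K') + \<epsilon>/8"
    using err_margin_le_of_Ldist_close[OF P Fk_nonempty[OF \<open>is_kernel T K'\<close>] assms(5,4), of "\<epsilon>/8" "\<gamma>/2" 0]
      Dk_less_imp_Ldist_close(2)[OF close] \<open>\<gamma> > 0\<close>
    by (simp add: Ldist_commute)
  then show "err P (Fk T K) - \<epsilon>/8 \<le> err_margin P (\<gamma>/2) (Fk T K')"
    by (simp add: err_eq_err_margin_0)
qed

lemma err_margin_bounds_of_DQ_less:
  assumes Q: "\<forall>i<r. dist_XY M (Q i)" and K: "is_kernel T K" "is_kernel T K'"
    and meas: "Fk T K \<subseteq> borel_measurable M" "Fk T K' \<subseteq> borel_measurable M"
    and D: "DQ T M r Q K K' < ennreal (\<epsilon> * \<gamma> / 16)" and "\<gamma> > 0"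
  shows "\<forall>i<r. err_margin (Q i) \<gamma> (Fk T K) + \<epsilon>/8 \<ge> err_margin (Q i) (\<gamma>/2) (Fk T K') \<and>
                err_margin (Q i) (\<gamma>/2) (Fk T K') \<ge> err (Q i) (Fk T K) - \<epsilon>/8"
proof (intro allI impI conjI)
  fix i assume "i < r"
  then have "Dk T M (Q i) K K' < ennreal (\<epsilon> * \<gamma> / 16)"
    using D by (rule order.strict_trans1[OF Dk_le_DQ])
  note bounds = err_margin_bounds_of_Dk_less[OF Q[rule_format, OF \<open>i < r\<close>] K meas this \<open>\<gamma> > 0\<close>]
  show "err_margin (Q i) \<gamma> (Fk T K) + \<epsilon>/8 \<ge> err_margin (Q i) (\<gamma>/2) (Fk T K')"
    by (rule bounds(1))
  show "err_margin (Q i) (\<gamma>/2) (Fk T K') \<ge> err (Q i) (Fk T K) - \<epsilon>/8"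
    by (rule bounds(2))
qed

lemma DQ_self: "DQ T M r Q K K = 0"
proof -
  have "Dk T M (Q i) K K \<le> 0" for i
    unfolding Dk_def
    by (intro max.boundedI SUP_least; rule INF_lower2, assumption, simp add: Ldist_def)
  then have "DQ T M r Q K K \<le> 0"
    unfolding DQ_def by (intro SUP_least) auto
  then show ?thesis
    by simp
qed

lemma cov_num_attained:
  assumes "\<epsilon> > 0"
  obtains C where "is_cover T M r Q Ks \<epsilon> C" and "ecard C = cov_num T M r Q Ks \<epsilon>"
proof -
  have "is_cover T M r Q Ks \<epsilon> Ks"
    unfolding is_cover_def using assms by (metis DQ_self subset_refl)
  then have "Inf (ecard ` {C. is_cover T M r Q Ks \<epsilon> C}) \<in> ecard ` {C. is_cover T M r Q Ks \<epsilon> C}"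
    by (intro wellorder_InfI) blast
  then show ?thesis
    using that unfolding cov_num_def by auto
qed

lemma cov_num_le_cov_num_max:
  "\<forall>i<r. dist_XY M (Q i) \<Longrightarrow> cov_num T M r Q Ks \<epsilon> \<le> cov_num_max T M r Ks \<epsilon>"
  unfolding cov_num_max_def by (intro SUP_upper) simp

theorem lemma5:
  fixes T :: "'h::{real_inner,complete_space} itself"
    and M :: "'x measure"
    and Ks :: "('x \<Rightarrow> 'x \<Rightarrow> real) set"
    and \<epsilon> \<gamma> :: real and n :: nat
    and P :: "nat \<Rightarrow> ('x \<times> bool) measure"
  assumes kernels: "\<forall>K\<in>Ks. is_kernel T K"
    and meas: "\<forall>K\<in>Ks. \<forall>h\<in>Fk T K. h \<in> borel_measurable M"
    and eps: "\<epsilon> > 0" and gam: "\<gamma> > 0"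
    and P: "\<forall>i<2*n. dist_XY M (P i)"
  shows "\<exists>C\<subseteq>Ks. ecard C \<le> cov_num_max T M (2*n) Ks (ennreal (\<epsilon>*\<gamma>/16)) \<and>
           (\<forall>K\<in>Ks. \<exists>K'\<in>C. \<forall>i<2*n.
              err_margin (P i) \<gamma> (Fk T K) + \<epsilon>/8 \<ge> err_margin (P i) (\<gamma>/2) (Fk T K') \<and>
              err_margin (P i) (\<gamma>/2) (Fk T K') \<ge> err (P i) (Fk T K) - \<epsilon>/8)"
proof -
  have "ennreal (\<epsilon>*\<gamma>/16) > 0"
    using eps gam by simp
  then obtain C where cover: "is_cover T M (2*n) P Ks (ennreal (\<epsilon>*\<gamma>/16)) C"
    and card: "ecard C = cov_num T M (2*n) P Ks (ennreal (\<epsilon>*\<gamma>/16))"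
    by (rule cov_num_attained)
  show ?thesis
  proof (intro exI[of _ C] conjI ballI)
    show "C \<subseteq> Ks"
      using cover unfolding is_cover_def by blast
    show "ecard C \<le> cov_num_max T M (2*n) Ks (ennreal (\<epsilon>*\<gamma>/16))"
      using card cov_num_le_cov_num_max[OF P] by simp
    fix K assume "K \<in> Ks"
    then obtain K' where "K' \<in> C" "K' \<in> Ks" and D: "DQ T M (2*n) P K K' < ennreal (\<epsilon>*\<gamma>/16)"
      using cover unfolding is_cover_def by blast
    show "\<exists>K'\<in>C. \<forall>i<2*n.
        err_margin (P i) \<gamma> (Fk T K) + \<epsilon>/8 \<ge> err_margin (P i) (\<gamma>/2) (Fk T K') \<and>
        err_margin (P i) (\<gamma>/2) (Fk T K') \<ge> err (P i) (Fk T K) - \<epsilon>/8"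
      using \<open>K \<in> Ks\<close> \<open>K' \<in> Ks\<close> kernels meas
      by (intro bexI[OF _ \<open>K' \<in> C\<close>] err_margin_bounds_of_DQ_less[OF P _ _ _ _ D gam]) auto
  qed
qed

end
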